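(* For every integer $n\ge 0$, $$\sum_{\pi\in \mathcal I^C_{2n+1}(321)}q^{\mathrm{des}^+(\pi)}=\sum_{k=0}^{\lfloor n/2\rfloor}\binom{\lceil n/2\rceil}{k}\binom{\lfloor n/2\rfloor}{k}q^k,\qquad \sum_{\pi\in \mathcal I^C_{2n+1}(321)}q^{\mathrm{maj}^+(\pi)}=\binom{n}{\lfloor n/2\rfloor}_q,$$ $$\sum_{\pi\in \mathcal I^C_{2n+1}(321)}q^{\mathrm{des}(\pi)}=\sum_{k=0}^{\lfloor n/2\rfloor}\binom{\lceil n/2\rceil}{k}\binom{\lfloor n/2\rfloor}{k}q^{2k}.$$
   Context: A permutation $\pi\in\mathcal S_m$ is centrosymmetric if $\pi(i)+\pi(m+1-i)=m+1$ for all $i$. $\mathcal I^C_m(321)$ is the set of centrosymmetric involutions in $\mathcal S_m$ avoiding the pattern $321$. $\mathrm{Des}(\pi)$ is the set of descents $i\in\{1,\dots,m-1\}$ ($\pi(i)>\pi(i+1)$), $\mathrm{des}(\pi)=|\mathrm{Des}(\pi)|$. With $n=\lfloor m/2\rfloor$, $\mathrm{Des}^+(\pi)=\mathrm{Des}(\pi)\cap\{1,\dots,n\}$, $\mathrm{des}^+(\pi)=|\mathrm{Des}^+(\pi)|$, $\mathrm{maj}^+(\pi)=\sum_{i\in\mathrm{Des}^+(\pi)}i$. $\binom{n}{h}_q$ is the Gaussian binomial coefficient. *)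

theory Defs
  imports "HOL-Combinatorics.Permutations"
begin

text \<open>Permutations of [m] = {1..m} are functions nat => nat permuting {1..m}
 (identity outside).\<close>

definition centrosymmetric :: "nat \<Rightarrow> (nat \<Rightarrow> nat) \<Rightarrow> bool" where
  "centrosymmetric m \<pi> \<longleftrightarrow> (\<forall>i\<in>{1..m}. \<pi> i + \<pi> (m + 1 - i) = m + 1)"

definition involution_on :: "nat \<Rightarrow> (nat \<Rightarrow> nat) \<Rightarrow> bool" where
  "involution_on m \<pi> \<longleftrightarrow> (\<forall>i\<in>{1..m}. \<pi> (\<pi> i) = i)"

definition avoids321 :: "nat \<Rightarrow> (nat \<Rightarrow> nat) \<Rightarrow> bool" where
  "avoids321 m \<pi> \<longleftrightarrow>
     \<not> (\<exists>i j k. 1 \<le> i \<and> i < j \<and> j < k \<and> k \<le> m \<and> \<pi> i > \<pi> j \<and> \<pi> j > \<pi> k)"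

definition ICinv321 :: "nat \<Rightarrow> (nat \<Rightarrow> nat) set" where
  "ICinv321 m = {\<pi>. \<pi> permutes {1..m} \<and> involution_on m \<pi> \<and> centrosymmetric m \<pi> \<and> avoids321 m \<pi>}"

definition Des :: "nat \<Rightarrow> (nat \<Rightarrow> nat) \<Rightarrow> nat set" where
  "Des m \<pi> = {i \<in> {1..<m}. \<pi> i > \<pi> (i + 1)}"

definition des :: "nat \<Rightarrow> (nat \<Rightarrow> nat) \<Rightarrow> nat" where
  "des m \<pi> = card (Des m \<pi>)"

definition Des_plus :: "nat \<Rightarrow> (nat \<Rightarrow> nat) \<Rightarrow> nat set" where
  "Des_plus m \<pi> = Des m \<pi> \<inter> {1..m div 2}"

definition des_plus :: "nat \<Rightarrow> (nat \<Rightarrow> nat) \<Rightarrow> nat" where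
  "des_plus m \<pi> = card (Des_plus m \<pi>)"

definition maj_plus :: "nat \<Rightarrow> (nat \<Rightarrow> nat) \<Rightarrow> nat" where
  "maj_plus m \<pi> = \<Sum> (Des_plus m \<pi>)"

fun qbinom :: "'a::comm_semiring_1 \<Rightarrow> nat \<Rightarrow> nat \<Rightarrow> 'a" where
  "qbinom q n 0 = 1"
| "qbinom q 0 (Suc k) = 0"
| "qbinom q (Suc n) (Suc k) = qbinom q n k + q ^ Suc k * qbinom q n (Suc k)"

end

theory Submission
  imports Defs
begin

text \<open>
  A centrosymmetric 321-avoiding involution
  of \<open>[2n+1]\<close> fixes \<open>n+1\<close> and maps \<open>{1..n}\<close> to itself, so it is the mirror-symmetric extension
  of a 321-avoiding involution \<open>s\<close> of \<open>[n]\<close>; its descents in \<open>{1..n}\<close> are exactly those of \<open>s\<close>,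
  and the remaining ones are their mirror images. For a 321-avoiding involution the \<open>k\<close>-th
  opener \<open>i < s i\<close> is matched with the \<open>k\<close>-th closer, so \<open>s\<close> is encoded by its word of openers,
  closers and fixed points, a lattice path on which fixed points can only occur at height \<open>0\<close>.
  Descents of \<open>s\<close> are the opener--closer factors of the word. A transfer-matrix computation over
  such words, weighting a descent at position \<open>i\<close> by \<open>x i\<close>, yields the weight enumerator of
  lattice paths in a \<open>\<lceil>n/2\<rceil> \<times> \<lfloor>n/2\<rfloor>\<close> box by their east--north corners. For constant weights
  this is the Narayana polynomial and for \<open>x i = q ^ i\<close> it is the Gaussian binomial coefficient.
\<close>

section \<open>Gaussian binomial coefficients\<close>

lemma qbinom_eq_0: "n < k \<Longrightarrow> qbinom q n k = 0"
proof (induction n arbitrary: k)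
  case 0
  then show ?case by (cases k) auto
next
  case (Suc n)
  then show ?case by (cases k) auto
qed

lemma qbinom_diag [simp]: "qbinom q n n = 1"
  by (induction n) (simp_all add: qbinom_eq_0)

lemma qbinom_Suc_Suc_dual:
  "qbinom (q::'a::comm_semiring_1) (Suc n) (Suc k) = q ^ (n - k) * qbinom q n k + qbinom q n (Suc k)"
proof (induction n arbitrary: k)
  case 0
  then show ?case by (cases k) auto
next
  case (Suc n)
  consider "k = 0" | k' where "k = Suc k'" "k \<le> n" | "n < k"
    by (cases k) force+
  then show ?case
  proof cases
    case 1
    have "1 + q * qbinom q n 1 = q ^ n + qbinom q n 1"
      using Suc.IH[of 0] by simp
    then have "q * (1 + q * qbinom q n 1) = q * (q ^ n + qbinom q n 1)"
      by simp
    then show ?thesis using 1 by (simp add: algebra_simps)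
  next
    case 2
    obtain d where d: "n = k + d"
      using 2(2) le_iff_add by blast
    have IH1: "qbinom q (Suc n) k = q ^ Suc d * qbinom q n k' + qbinom q n k"
      using Suc.IH[of k'] by (simp add: 2(1) d del: qbinom.simps)
    have IH2: "qbinom q (Suc n) (Suc k) = q ^ d * qbinom q n k + qbinom q n (Suc k)"
      using Suc.IH[of k] by (simp add: d del: qbinom.simps)
    have "qbinom q (Suc (Suc n)) (Suc k) = qbinom q (Suc n) k + q ^ Suc k * qbinom q (Suc n) (Suc k)"
      by (rule qbinom.simps(3))
    also have "\<dots> = q ^ Suc d * (qbinom q n k' + q ^ k * qbinom q n k)
                      + (qbinom q n k + q ^ Suc k * qbinom q n (Suc k))"
      unfolding IH1 IH2 by (simp add: algebra_simps power_add)
    also have "\<dots> = q ^ (Suc n - k) * qbinom q (Suc n) k + qbinom q (Suc n) (Suc k)"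
      using 2(1) d by simp
    finally show ?thesis .
  next
    case 3
    then show ?thesis by (auto simp: le_Suc_eq qbinom_eq_0 dest: Suc_leI)
  qed
qed

lemma qbinom_symmetric: "qbinom (q::'a::comm_semiring_1) (a + b) a = qbinom q (a + b) b"
proof (induction "a + b" arbitrary: a b)
  case 0
  then show ?case by simp
next
  case (Suc n)
  show ?case
  proof (cases a)
    case 0
    then show ?thesis by simp
  next
    case (Suc a')
    show ?thesis
    proof (cases b)
      case 0
      then show ?thesis by simp
    next
      case (Suc b')
      have n: "n = a' + Suc b'" "n = Suc a' + b'"
        using \<open>Suc n = a + b\<close> \<open>a = Suc a'\<close> Suc by simp_all
      have "qbinom q (Suc n) (Suc a') = qbinom q n a' + q ^ Suc a' * qbinom q n (Suc a')"
        by simp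
      also have "\<dots> = qbinom q n (Suc b') + q ^ Suc a' * qbinom q n b'"
        using Suc.hyps(1)[OF n(1)] Suc.hyps(1)[OF n(2)] n by simp
      also have "\<dots> = qbinom q (Suc n) (Suc b')"
      proof -
        have "n - b' = Suc a'"
          using n(2) by simp
        then show ?thesis
          unfolding qbinom_Suc_Suc_dual by (simp only: add.commute)
      qed
      finally show ?thesis
        using \<open>Suc n = a + b\<close> \<open>a = Suc a'\<close> Suc by simp
    qed
  qed
qed

section \<open>Lattice paths weighted by their corners\<close>

text \<open>
  Lattice paths from \<open>(0, 0)\<close> to \<open>(a, b)\<close> with unit east and north steps, where an east step
  with index \<open>i\<close> (counting from \<open>1\<close>) that is immediately followed by a north step has
  weight \<open>x i\<close>. \<open>corner_paths_E\<close> sums over the paths ending with an east step,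
  \<open>corner_paths_N\<close> over the others (including the empty path).
\<close>

fun corner_paths_E :: "(nat \<Rightarrow> 'a::comm_semiring_1) \<Rightarrow> nat \<Rightarrow> nat \<Rightarrow> 'a"
and corner_paths_N :: "(nat \<Rightarrow> 'a::comm_semiring_1) \<Rightarrow> nat \<Rightarrow> nat \<Rightarrow> 'a" where
  "corner_paths_E x 0 b = 0"
| "corner_paths_E x (Suc a) b = corner_paths_E x a b + corner_paths_N x a b"
| "corner_paths_N x a 0 = (if a = 0 then 1 else 0)"
| "corner_paths_N x a (Suc b) = x (a + b) * corner_paths_E x a b + corner_paths_N x a b"

definition corner_paths :: "(nat \<Rightarrow> 'a::comm_semiring_1) \<Rightarrow> nat \<Rightarrow> nat \<Rightarrow> 'a" where
  "corner_paths x a b = corner_paths_E x a b + corner_paths_N x a b"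

lemma corner_paths_E_Suc: "corner_paths_E x (Suc a) b = corner_paths x a b"
  by (simp add: corner_paths_def)

lemma corner_paths_0_left [simp]: "corner_paths x 0 b = 1"
  by (induction b) (auto simp: corner_paths_def)

lemma corner_paths_0_right [simp]: "corner_paths x a 0 = 1"
  by (induction a) (auto simp: corner_paths_def corner_paths_E_Suc)

lemma corner_paths_power_Suc:
  fixes q :: "'a::comm_semiring_1"
  assumes N: "\<And>a. corner_paths_N (\<lambda>i. q ^ i) a (Suc b) = q ^ a * qbinom q (a + b) b"
  shows "corner_paths (\<lambda>i. q ^ i) a (Suc b) = qbinom q (a + Suc b) (Suc b)"
proof (induction a)
  case 0
  show ?case by simp
next
  case (Suc a)
  have "corner_paths (\<lambda>i. q ^ i) (Suc a) (Suc b)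
      = corner_paths (\<lambda>i. q ^ i) a (Suc b) + corner_paths_N (\<lambda>i. q ^ i) (Suc a) (Suc b)"
    unfolding corner_paths_def[of _ "Suc a"] corner_paths_E_Suc ..
  also have "\<dots> = qbinom q (a + Suc b) (Suc b) + q ^ Suc a * qbinom q (Suc a + b) b"
    using Suc.IH N[of "Suc a"] by simp
  also have "\<dots> = qbinom q (Suc (a + Suc b)) (Suc b)"
  proof -
    have "a + Suc b - b = Suc a" "Suc a + b = a + Suc b"
      by simp_all
    then show ?thesis
      unfolding qbinom_Suc_Suc_dual by (simp only: add.commute)
  qed
  finally show ?case by simp
qed

lemma corner_paths_N_power:
  fixes q :: "'a::comm_semiring_1"
  shows "corner_paths_N (\<lambda>i. q ^ i) a (Suc b) = q ^ a * qbinom q (a + b) b"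
proof (induction b arbitrary: a)
  case 0
  show ?case
    by (cases a) (simp_all add: corner_paths_E_Suc del: corner_paths_E.simps(2))
next
  case (Suc b)
  show ?case
  proof (cases a)
    case 0
    then show ?thesis using Suc.IH[of 0] by simp
  next
    case (Suc a')
    have "corner_paths_N (\<lambda>i. q ^ i) a (Suc (Suc b))
        = q ^ (a + Suc b) * corner_paths (\<lambda>i. q ^ i) a' (Suc b) + corner_paths_N (\<lambda>i. q ^ i) a (Suc b)"
      by (simp only: corner_paths_N.simps(2) Suc corner_paths_E_Suc)
    also have "\<dots> = q ^ (a + Suc b) * qbinom q (a' + Suc b) (Suc b) + q ^ a * qbinom q (a' + Suc b) b"
      using corner_paths_power_Suc[OF Suc.IH, of a'] Suc.IH[of a] Suc by (simp del: corner_paths_N.simps)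
    also have "\<dots> = q ^ a * (qbinom q (a' + Suc b) b + q ^ Suc b * qbinom q (a' + Suc b) (Suc b))"
      by (simp add: algebra_simps power_add)
    also have "\<dots> = q ^ a * qbinom q (a + Suc b) (Suc b)"
      using Suc by simp
    finally show ?thesis .
  qed
qed

lemma corner_paths_power: "corner_paths (\<lambda>i. q ^ i) a b = qbinom q (a + b) b"
proof (cases b)
  case (Suc b')
  then show ?thesis
    using corner_paths_power_Suc[OF corner_paths_N_power] by (simp del: qbinom.simps)
qed simp

lemma corner_paths_power_symmetric:
  "corner_paths (\<lambda>i. q ^ i) c (Suc c) = corner_paths (\<lambda>i. q ^ i) (Suc c) c"
  using qbinom_symmetric[of q "Suc c" c] by (simp add: corner_paths_power add.commute)

definition narayana_term :: "'a::comm_ring_1 \<Rightarrow> nat \<Rightarrow> nat \<Rightarrow> nat \<Rightarrow> 'a" where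
  "narayana_term t a b i = of_nat (a choose i) * of_nat (b choose i) * t ^ i"

definition narayana_sum :: "'a::comm_ring_1 \<Rightarrow> nat \<Rightarrow> nat \<Rightarrow> 'a" where
  "narayana_sum t a b = (\<Sum>i\<le>a + b. narayana_term t a b i)"

lemma narayana_term_eq_0: "a < i \<or> b < i \<Longrightarrow> narayana_term t a b i = 0"
  unfolding narayana_term_def by (auto simp: binomial_eq_0)

lemma narayana_term_0 [simp]: "narayana_term t a b 0 = 1"
  by (simp add: narayana_term_def)

lemma narayana_sum_extend: "a \<le> N \<Longrightarrow> narayana_sum t a b = (\<Sum>i\<le>N. narayana_term t a b i)"
  unfolding narayana_sum_def by (rule sum.mono_neutral_cong) (auto intro!: narayana_term_eq_0)

lemma narayana_sum_eq: "narayana_sum t a b = (\<Sum>i=0..b. of_nat (a choose i) * of_nat (b choose i) * t ^ i)"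
proof -
  have "narayana_sum t a b = (\<Sum>i\<in>{0..b}. narayana_term t a b i)"
    unfolding narayana_sum_def by (rule sum.mono_neutral_right) (auto intro!: narayana_term_eq_0)
  then show ?thesis
    by (simp add: narayana_term_def)
qed

lemma narayana_sum_commute: "narayana_sum t a b = narayana_sum t b a"
  unfolding narayana_sum_def narayana_term_def by (simp add: ac_simps)

lemma narayana_sum_0_left [simp]: "narayana_sum t 0 b = 1"
  using narayana_sum_extend[of 0 0 t b] by simp

lemma narayana_sum_0_right [simp]: "narayana_sum t a 0 = 1"
  using narayana_sum_commute narayana_sum_0_left by metis

text \<open>Coefficientwise this is Pascal's rule applied to both binomial factors.\<close>

lemma narayana_term_Suc_Suc:
  "narayana_term t (Suc a) (Suc b) (Suc i)
   = narayana_term t a (Suc b) (Suc i) + narayana_term t (Suc a) b (Suc i)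
     + (t - 1) * narayana_term t a b (Suc i) + (t * narayana_term t a b i - t * narayana_term t a b (Suc i))"
  unfolding narayana_term_def by (simp add: algebra_simps)

lemma narayana_sum_Suc_Suc:
  "narayana_sum t (Suc a) (Suc b) = narayana_sum t a (Suc b) + narayana_sum t (Suc a) b + (t - 1) * narayana_sum t a b"
proof -
  define N where "N = Suc (Suc a)"
  let ?T = "narayana_term t"
  have shift: "narayana_sum t a' b' = 1 + (\<Sum>i<N. ?T a' b' (Suc i))" if "a' \<le> N" for a' b'
    unfolding narayana_sum_extend[OF that]
    by (simp only: N_def sum.atMost_Suc_shift lessThan_Suc_atMost narayana_term_0)
  have telescope: "(\<Sum>i<N. t * ?T a b i - t * ?T a b (Suc i)) = t"
    using sum_lessThan_telescope'[of "\<lambda>i. t * ?T a b i" N]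
    by (simp add: narayana_term_eq_0 N_def)
  have "narayana_sum t (Suc a) (Suc b) = 1 + (\<Sum>i<N. ?T (Suc a) (Suc b) (Suc i))"
    by (rule shift) (simp add: N_def)
  also have "\<dots> = 1 + (\<Sum>i<N. ?T a (Suc b) (Suc i)) + (\<Sum>i<N. ?T (Suc a) b (Suc i))
     + (t - 1) * (\<Sum>i<N. ?T a b (Suc i)) + (\<Sum>i<N. t * ?T a b i - t * ?T a b (Suc i))"
    unfolding narayana_term_Suc_Suc sum.distrib sum_distrib_left by (simp only: add.assoc)
  also have "\<dots> = narayana_sum t a (Suc b) + narayana_sum t (Suc a) b + (t - 1) * narayana_sum t a b"
    unfolding telescope by (subst (1 2 3) shift) (auto simp: N_def algebra_simps)
  finally show ?thesis .
qed

lemma corner_paths_const_Suc_Suc: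
  fixes t :: "'a::comm_ring_1"
  shows "corner_paths (\<lambda>_. t) (Suc a) (Suc b)
   = corner_paths (\<lambda>_. t) a (Suc b) + corner_paths (\<lambda>_. t) (Suc a) b + (t - 1) * corner_paths (\<lambda>_. t) a b"
proof -
  have "corner_paths (\<lambda>_. t) (Suc a) (Suc b)
      = corner_paths (\<lambda>_. t) a (Suc b) + t * corner_paths_E (\<lambda>_. t) (Suc a) b + corner_paths_N (\<lambda>_. t) (Suc a) b"
    by (simp only: corner_paths_def[of _ "Suc a"] corner_paths_E_Suc corner_paths_N.simps add.assoc)
  also have "\<dots> = corner_paths (\<lambda>_. t) a (Suc b) + corner_paths (\<lambda>_. t) (Suc a) b
                  + (t - 1) * corner_paths_E (\<lambda>_. t) (Suc a) b"
    by (simp add: corner_paths_def algebra_simps)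
  finally show ?thesis by (simp only: corner_paths_E_Suc)
qed

lemma corner_paths_const: "corner_paths (\<lambda>_. t) a b = narayana_sum t a b"
proof (induction a arbitrary: b)
  case 0
  then show ?case by simp
next
  case (Suc a)
  then show ?case
    by (induction b) (simp_all add: corner_paths_const_Suc_Suc narayana_sum_Suc_Suc)
qed

section \<open>Step words and their transfer matrix\<close>

text \<open>
  Words over \<open>step\<close> are stored last letter first: the head of a word of length \<open>n\<close> is its
  \<open>n\<close>-th letter, and \<open>height ws\<close> is the height reached after all of \<open>ws\<close>. A word is admissible
  if it never goes below \<open>0\<close> and has flat steps only at height \<open>0\<close>; an up step at position \<open>i\<close>
  followed by a down step at position \<open>i + 1\<close> has weight \<open>x i\<close>.
\<close>

datatype step = Up | Down | Flat

lemma finite_UNIV_step: "finite (UNIV :: step set)"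
proof (rule finite_subset)
  show "(UNIV :: step set) \<subseteq> {Up, Down, Flat}"
    using step.exhaust by blast
qed simp

fun height :: "step list \<Rightarrow> nat" where
  "height [] = 0"
| "height (Up # ws) = Suc (height ws)"
| "height (Down # ws) = height ws - 1"
| "height (Flat # ws) = height ws"

fun admissible :: "step list \<Rightarrow> bool" where
  "admissible [] = True"
| "admissible (Up # ws) = admissible ws"
| "admissible (Down # ws) = (admissible ws \<and> 1 \<le> height ws)"
| "admissible (Flat # ws) = (admissible ws \<and> height ws = 0)"

fun weight :: "(nat \<Rightarrow> 'a::comm_semiring_1) \<Rightarrow> step list \<Rightarrow> 'a" where
  "weight x [] = 1"
| "weight x [c] = 1"
| "weight x (c # d # ws) = (if c = Down \<and> d = Up then x (Suc (length ws)) else 1) * weight x (d # ws)"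

lemma weight_Up: "weight x (Up # ws) = weight x ws"
  by (cases ws) auto

lemma weight_Flat: "weight x (Flat # ws) = weight x ws"
  by (cases ws) auto

lemma weight_Down: "weight x (Down # ws) = (if ws \<noteq> [] \<and> hd ws = Up then x (length ws) else 1) * weight x ws"
  by (cases ws) auto

definition paths :: "nat \<Rightarrow> nat \<Rightarrow> step list set" where
  "paths n h = {ws. length ws = n \<and> admissible ws \<and> height ws = h}"

definition paths_up :: "nat \<Rightarrow> nat \<Rightarrow> step list set" where
  "paths_up n h = {ws \<in> paths n h. ws \<noteq> [] \<and> hd ws = Up}"

lemma finite_paths: "finite (paths n h)"
proof (rule finite_subset)
  show "paths n h \<subseteq> {ws. set ws \<subseteq> UNIV \<and> length ws = n}"
    unfolding paths_def by auto
  show "finite {ws. set ws \<subseteq> (UNIV :: step set) \<and> length ws = n}"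
    by (rule finite_lists_length_eq) (rule finite_UNIV_step)
qed

lemma paths_up_Suc: "paths_up (Suc n) h = (if h = 0 then {} else Cons Up ` paths n (h - 1))"
proof (intro set_eqI iffI)
  fix ws
  assume "ws \<in> paths_up (Suc n) h"
  then obtain r where "ws = Up # r" "r \<in> paths n (h - 1)" "h \<noteq> 0"
    unfolding paths_up_def paths_def by (auto simp: length_Suc_conv)
  then show "ws \<in> (if h = 0 then {} else Cons Up ` paths n (h - 1))"
    by simp
qed (auto simp: paths_up_def paths_def split: if_splits)

lemma paths_not_up_Suc:
  "paths (Suc n) h - paths_up (Suc n) h
   = Cons Down ` paths n (Suc h) \<union> (if h = 0 then Cons Flat ` paths n 0 else {})"
proof (intro set_eqI iffI)
  fix ws
  assume "ws \<in> paths (Suc n) h - paths_up (Suc n) h"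
  then obtain c r where "ws = c # r" "c \<noteq> Up" "length r = n" "admissible (c # r)" "height (c # r) = h"
    unfolding paths_def paths_up_def by (auto simp: length_Suc_conv)
  then show "ws \<in> Cons Down ` paths n (Suc h) \<union> (if h = 0 then Cons Flat ` paths n 0 else {})"
    by (cases c) (auto simp: paths_def)
next
  fix ws
  assume "ws \<in> Cons Down ` paths n (Suc h) \<union> (if h = 0 then Cons Flat ` paths n 0 else {})"
  then consider r where "ws = Down # r" "r \<in> paths n (Suc h)"
    | r where "ws = Flat # r" "r \<in> paths n 0" "h = 0"
    by (auto split: if_splits)
  then show "ws \<in> paths (Suc n) h - paths_up (Suc n) h"
    by cases (auto simp: paths_def paths_up_def)
qed

lemma sum_image_Cons: "(\<Sum>ws\<in>Cons c ` A. f ws) = (\<Sum>ws\<in>A. f (c # ws))"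
  by (subst sum.reindex) (auto simp: inj_on_def)

definition up_sum :: "(nat \<Rightarrow> 'a::comm_semiring_1) \<Rightarrow> nat \<Rightarrow> nat \<Rightarrow> 'a" where
  "up_sum x n h = (\<Sum>ws\<in>paths_up n h. weight x ws)"

definition not_up_sum :: "(nat \<Rightarrow> 'a::comm_semiring_1) \<Rightarrow> nat \<Rightarrow> nat \<Rightarrow> 'a" where
  "not_up_sum x n h = (\<Sum>ws\<in>paths n h - paths_up n h. weight x ws)"

lemma sum_paths_split:
  "(\<Sum>ws\<in>paths n h. f ws) = (\<Sum>ws\<in>paths_up n h. f ws) + (\<Sum>ws\<in>paths n h - paths_up n h. f ws)"
  using sum.subset_diff[of "paths_up n h" "paths n h" f] finite_paths
  by (simp add: paths_up_def add.commute)

lemma sum_paths_eq: "(\<Sum>ws\<in>paths n h. weight x ws) = up_sum x n h + not_up_sum x n h"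
  unfolding up_sum_def not_up_sum_def by (rule sum_paths_split)

lemma up_sum_0: "up_sum x 0 h = 0"
proof -
  have "paths_up 0 h = {}"
    by (auto simp: paths_up_def paths_def)
  then show ?thesis by (simp add: up_sum_def)
qed

lemma not_up_sum_0: "not_up_sum x 0 h = (if h = 0 then 1 else 0)"
proof -
  have "paths 0 h - paths_up 0 h = (if h = 0 then {[]} else {})"
    by (auto simp: paths_def paths_up_def)
  then show ?thesis by (simp add: not_up_sum_def)
qed

lemma up_sum_Suc:
  "up_sum x (Suc n) h = (if h = 0 then 0 else up_sum x n (h - 1) + not_up_sum x n (h - 1))"
  using sum_paths_eq[of x n "h - 1"] by (simp add: up_sum_def paths_up_Suc sum_image_Cons weight_Up)

lemma not_up_sum_Suc:
  "not_up_sum x (Suc n) h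
   = x n * up_sum x n (Suc h) + not_up_sum x n (Suc h) + (if h = 0 then up_sum x n 0 + not_up_sum x n 0 else 0)"
proof -
  have down: "(\<Sum>ws\<in>paths n (Suc h). weight x (Down # ws)) = x n * up_sum x n (Suc h) + not_up_sum x n (Suc h)"
  proof -
    have "(\<Sum>ws\<in>paths n (Suc h). weight x (Down # ws))
        = (\<Sum>ws\<in>paths_up n (Suc h). weight x (Down # ws)) + (\<Sum>ws\<in>paths n (Suc h) - paths_up n (Suc h). weight x (Down # ws))"
      by (rule sum_paths_split)
    also have "\<dots> = (\<Sum>ws\<in>paths_up n (Suc h). x n * weight x ws) + not_up_sum x n (Suc h)"
      unfolding not_up_sum_def
      by (intro arg_cong2[where f = "(+)"] sum.cong) (auto simp: weight_Down paths_up_def paths_def)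
    finally show ?thesis
      by (simp add: up_sum_def sum_distrib_left)
  qed
  have disjoint: "Cons Down ` paths n (Suc h) \<inter> Cons Flat ` paths n 0 = {}"
    by auto
  have "not_up_sum x (Suc n) h
      = (\<Sum>ws\<in>paths n (Suc h). weight x (Down # ws))
        + (if h = 0 then \<Sum>ws\<in>paths n 0. weight x (Flat # ws) else 0)"
    unfolding not_up_sum_def paths_not_up_Suc
    using disjoint by (cases "h = 0") (simp_all add: sum.union_disjoint finite_paths sum_image_Cons)
  then show ?thesis
    by (simp add: down weight_Flat sum_paths_eq)
qed

text \<open>
  Closed forms: a word of length \<open>n\<close> ending at height \<open>h > 0\<close> corresponds to a lattice path
  to \<open>(n - j, j)\<close> with \<open>j = (n - h) div 2\<close>.
\<close>

definition up_closed :: "(nat \<Rightarrow> 'a::comm_semiring_1) \<Rightarrow> nat \<Rightarrow> nat \<Rightarrow> 'a" where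
  "up_closed x n h = (if 0 < h \<and> h \<le> n then corner_paths_E x (n - (n - h) div 2) ((n - h) div 2) else 0)"

definition not_up_closed :: "(nat \<Rightarrow> 'a::comm_semiring_1) \<Rightarrow> nat \<Rightarrow> nat \<Rightarrow> 'a" where
  "not_up_closed x n h =
     (if h = 0 then corner_paths x (n - n div 2) (n div 2)
      else if h \<le> n then corner_paths_N x (n - (n - h) div 2) ((n - h) div 2) else 0)"

lemma up_closed_Suc:
  "up_closed x (Suc n) h = (if h = 0 then 0 else up_closed x n (h - 1) + not_up_closed x n (h - 1))"
proof (cases h)
  case 0
  then show ?thesis by (simp add: up_closed_def)
next
  case (Suc h')
  have "Suc n - (n - h') div 2 = Suc (n - (n - h') div 2)"
    by simp
  then show ?thesis
    using Suc by (auto simp: up_closed_def not_up_closed_def corner_paths_def)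
qed

text \<open>
  For odd \<open>n\<close> the boxes \<open>c \<times> (c + 1)\<close> and \<open>(c + 1) \<times> c\<close> meet here; this is the only place
  where the symmetry hypothesis is used.
\<close>

lemma corner_paths_half_Suc:
  assumes sym: "\<And>c. corner_paths x c (Suc c) = corner_paths x (Suc c) c"
  shows "corner_paths x (m - m div 2) (Suc (m div 2)) = corner_paths x (Suc m - Suc m div 2) (Suc m div 2)"
proof (cases "even m")
  case True
  then obtain c where "m = 2 * c"
    by blast
  then show ?thesis using sym[of c] by simp
next
  case False
  then obtain c where "m = 2 * c + 1"
    using oddE by blast
  then show ?thesis by simp
qed

lemma not_up_closed_Suc:
  assumes sym: "\<And>c. corner_paths x c (Suc c) = corner_paths x (Suc c) c"
  shows "not_up_closed x (Suc n) h
    = x n * up_closed x n (Suc h) + not_up_closed x n (Suc h)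
      + (if h = 0 then up_closed x n 0 + not_up_closed x n 0 else 0)"
proof (cases "Suc h \<le> n")
  case True
  define j where "j = (n - Suc h) div 2"
  have "Suc n - h = n - Suc h + 2"
    using True by simp
  then have j: "(Suc n - h) div 2 = Suc j" "n - j + j = n"
    by (simp_all add: j_def)
  have step: "x n * up_closed x n (Suc h) + not_up_closed x n (Suc h) = corner_paths_N x (n - j) (Suc j)"
    using True j(2) by (simp add: up_closed_def not_up_closed_def j_def)
  show ?thesis
  proof (cases h)
    case 0
    obtain m where m: "n = Suc m" "j = m div 2"
      using True 0 by (cases n) (auto simp: j_def)
    have "not_up_closed x (Suc n) h = corner_paths_N x (n - j) (Suc j) + corner_paths_E x (n - j) (Suc j)"
      using j(1) 0 by (simp add: not_up_closed_def corner_paths_def ac_simps)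
    also have "corner_paths_E x (n - j) (Suc j) = corner_paths x (m - m div 2) (Suc (m div 2))"
      using m by (simp only: corner_paths_E_Suc Suc_diff_le div_le_dividend)
    also have "\<dots> = corner_paths x (n - n div 2) (n div 2)"
      using corner_paths_half_Suc[OF sym, of m] m by simp
    finally show ?thesis
      using step 0 by (simp add: up_closed_def not_up_closed_def)
  next
    case (Suc h')
    have "not_up_closed x (Suc n) h = corner_paths_N x (n - j) (Suc j)"
      using j(1) True Suc by (simp add: not_up_closed_def)
    then show ?thesis
      using step Suc by simp
  qed
next
  case False
  then show ?thesis
    by (cases "h = 0") (auto simp: up_closed_def not_up_closed_def le_Suc_eq)
qed

lemma weight_sums_closed_form:
  assumes sym: "\<And>c. corner_paths x c (Suc c) = corner_paths x (Suc c) c"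
  shows "up_sum x n h = up_closed x n h \<and> not_up_sum x n h = not_up_closed x n h"
proof (induction n arbitrary: h)
  case 0
  then show ?case
    by (simp add: up_sum_0 not_up_sum_0 up_closed_def not_up_closed_def)
next
  case (Suc n)
  then show ?case
    by (simp add: up_sum_Suc not_up_sum_Suc up_closed_Suc not_up_closed_Suc[OF sym])
qed

lemma sum_paths_height_0:
  assumes sym: "\<And>c. corner_paths x c (Suc c) = corner_paths x (Suc c) c"
  shows "(\<Sum>ws\<in>paths n 0. weight x ws) = corner_paths x (n - n div 2) (n div 2)"
  using weight_sums_closed_form[OF sym, of n 0]
  by (simp add: sum_paths_eq up_closed_def not_up_closed_def)

section \<open>321-avoiding involutions\<close>

definition excedance_lr_max :: "nat \<Rightarrow> (nat \<Rightarrow> nat) \<Rightarrow> bool" where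
  "excedance_lr_max N s \<longleftrightarrow> \<not> (\<exists>i j. 1 \<le> i \<and> i < j \<and> j \<le> N \<and> j \<le> s j \<and> s j < s i)"

definition inv321 :: "nat \<Rightarrow> (nat \<Rightarrow> nat) \<Rightarrow> bool" where
  "inv321 N s \<longleftrightarrow> s permutes {1..N} \<and> involution_on N s \<and> excedance_lr_max N s"

lemma permutes_interval_range: "s permutes {1..N} \<Longrightarrow> 1 \<le> i \<Longrightarrow> i \<le> N \<Longrightarrow> 1 \<le> s i \<and> s i \<le> N"
  using permutes_in_image[of s "{1..N}" i] by auto

lemma involution_permutes:
  assumes "\<And>i. i \<notin> S \<Longrightarrow> f i = i" "\<And>i. i \<in> S \<Longrightarrow> f i \<in> S" "\<And>i. i \<in> S \<Longrightarrow> f (f i) = i"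
  shows "f permutes S"
  by (rule bij_imp_permutes) (use assms in \<open>auto intro!: bij_betw_byWitness[where f' = f]\<close>)

lemma excedance_lr_max_if_avoids321:
  assumes perm: "s permutes {1..N}" and inv: "involution_on N s" and avoid: "avoids321 N s"
  shows "excedance_lr_max N s"
  unfolding excedance_lr_max_def
proof (intro notI, elim exE conjE)
  fix i j
  assume h: "1 \<le> i" "i < j" "j \<le> N" "j \<le> s j" "s j < s i"
  have si: "s i \<le> N" "s (s i) = i"
    using permutes_interval_range[OF perm, of i] inv h unfolding involution_on_def by auto
  show False
  proof (cases "s j = j")
    case True
    then have "1 \<le> i \<and> i < j \<and> j < s i \<and> s i \<le> N \<and> s i > s j \<and> s j > s (s i)"
      using h si by simp
    then show False using avoid unfolding avoids321_def by blast
  next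
    case False
    have "s j \<le> N" "s (s j) = j"
      using permutes_interval_range[OF perm, of j] inv h unfolding involution_on_def by auto
    then have "1 \<le> i \<and> i < j \<and> j < s j \<and> s j \<le> N \<and> s i > s j \<and> s j > s (s j)"
      using h False by simp
    then show False using avoid unfolding avoids321_def by blast
  qed
qed

text \<open>
  If the middle entry \<open>j\<close> of a \<open>321\<close> pattern \<open>i < j < k\<close> is not a weak excedance, the pair
  \<open>s k < s j\<close> violates \<open>excedance_lr_max\<close> instead.
\<close>

lemma avoids321_if_excedance_lr_max:
  assumes perm: "s permutes {1..N}" and inv: "involution_on N s" and lr_max: "excedance_lr_max N s"
  shows "avoids321 N s"
  unfolding avoids321_def
proof (intro notI, elim exE conjE)
  fix i j k
  assume h: "1 \<le> i" "i < j" "j < k" "k \<le> N" "s i > s j" "s j > s k"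
  show False
  proof (cases "j \<le> s j")
    case True
    then have "1 \<le> i \<and> i < j \<and> j \<le> N \<and> j \<le> s j \<and> s j < s i"
      using h by simp
    then show False using lr_max unfolding excedance_lr_max_def by blast
  next
    case False
    have "1 \<le> s k" "s (s j) = j" "s (s k) = k"
      using permutes_interval_range[OF perm, of k] inv h unfolding involution_on_def by auto
    moreover have "s j \<le> N"
      using permutes_interval_range[OF perm, of j] h by simp
    ultimately have "1 \<le> s k \<and> s k < s j \<and> s j \<le> N \<and> s j \<le> s (s j) \<and> s (s j) < s (s k)"
      using h False by simp
    then show False using lr_max unfolding excedance_lr_max_def by blast
  qed
qed

lemma ICinv321_iff: "\<pi> \<in> ICinv321 m \<longleftrightarrow> inv321 m \<pi> \<and> centrosymmetric m \<pi>"
  using excedance_lr_max_if_avoids321 avoids321_if_excedance_lr_max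
  unfolding ICinv321_def inv321_def by blast

lemma inv321_permutes: "inv321 N s \<Longrightarrow> s permutes {1..N}"
  by (simp add: inv321_def)

lemma inv321_range: "inv321 N s \<Longrightarrow> 1 \<le> i \<Longrightarrow> i \<le> N \<Longrightarrow> 1 \<le> s i \<and> s i \<le> N"
  by (blast dest: inv321_permutes permutes_interval_range)

lemma inv321_involutive: "inv321 N s \<Longrightarrow> 1 \<le> i \<Longrightarrow> i \<le> N \<Longrightarrow> s (s i) = i"
  by (simp add: inv321_def involution_on_def)

lemma inv321_fixed: "inv321 N s \<Longrightarrow> \<not> (1 \<le> i \<and> i \<le> N) \<Longrightarrow> s i = i"
  using permutes_not_in[of s "{1..N}" i] by (auto simp: inv321_def)

lemma inv321_lr_max: "inv321 N s \<Longrightarrow> 1 \<le> i \<Longrightarrow> i < j \<Longrightarrow> j \<le> N \<Longrightarrow> j \<le> s j \<Longrightarrow> s i \<le> s j"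
  unfolding inv321_def excedance_lr_max_def using not_le by blast

lemma inv321I:
  assumes "\<And>i. \<not> (1 \<le> i \<and> i \<le> N) \<Longrightarrow> s i = i"
    and "\<And>i. 1 \<le> i \<Longrightarrow> i \<le> N \<Longrightarrow> 1 \<le> s i \<and> s i \<le> N \<and> s (s i) = i"
    and "\<And>i j. 1 \<le> i \<Longrightarrow> i < j \<Longrightarrow> j \<le> N \<Longrightarrow> j \<le> s j \<Longrightarrow> s i \<le> s j"
  shows "inv321 N s"
proof -
  have "s permutes {1..N}"
    by (rule involution_permutes) (use assms(1,2) in auto)
  moreover have "involution_on N s"
    using assms(2) by (simp add: involution_on_def)
  moreover have "excedance_lr_max N s"
    using assms(3) unfolding excedance_lr_max_def using not_le by blast
  ultimately show ?thesis by (simp add: inv321_def)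
qed

lemma inv321_rl_min:
  assumes s: "inv321 N s" and ij: "1 \<le> j" "j < i" "i \<le> N" and deficiency: "s j \<le> j"
  shows "s j \<le> s i"
proof (rule ccontr)
  assume "\<not> s j \<le> s i"
  moreover have "1 \<le> s i" "s (s i) = i" "s j \<le> N" "s (s j) = j"
    using inv321_range[OF s] inv321_involutive[OF s] ij by auto
  ultimately have "s (s i) \<le> s (s j)"
    using inv321_lr_max[OF s, of "s i" "s j"] deficiency by simp
  then show False
    using \<open>s (s i) = i\<close> \<open>s (s j) = j\<close> ij by simp
qed

section \<open>Encoding 321-avoiding involutions by step words\<close>

definition step_of :: "(nat \<Rightarrow> nat) \<Rightarrow> nat \<Rightarrow> step" where
  "step_of s i = (if i < s i then Up else if s i < i then Down else Flat)"

fun step_word :: "(nat \<Rightarrow> nat) \<Rightarrow> nat \<Rightarrow> step list" where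
  "step_word s 0 = []"
| "step_word s (Suc k) = step_of s (Suc k) # step_word s k"

lemma length_step_word [simp]: "length (step_word s k) = k"
  by (induction k) auto

lemma step_word_eq_iff: "step_word s k = step_word t k \<longleftrightarrow> (\<forall>i. 1 \<le> i \<and> i \<le> k \<longrightarrow> step_of s i = step_of t i)"
  by (induction k) (auto simp: le_Suc_eq)

definition open_arcs :: "(nat \<Rightarrow> nat) \<Rightarrow> nat \<Rightarrow> nat set" where
  "open_arcs s k = {i \<in> {1..k}. k < s i}"

lemma open_arcs_Suc_Up:
  assumes s: "inv321 N s" and k: "Suc k \<le> N" "Suc k < s (Suc k)"
  shows "open_arcs s (Suc k) = insert (Suc k) (open_arcs s k)"
proof -
  have "k < s i \<longleftrightarrow> Suc k < s i" if "1 \<le> i" "i \<le> k" for i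
  proof -
    have "s i \<noteq> Suc k"
      using inv321_involutive[OF s, of i] k that by force
    then show ?thesis by auto
  qed
  then show ?thesis
    using k by (auto simp: open_arcs_def le_Suc_eq)
qed

lemma open_arcs_Suc_Down:
  assumes s: "inv321 N s" and k: "Suc k \<le> N" "s (Suc k) < Suc k"
  shows "s (Suc k) \<in> open_arcs s k" "open_arcs s (Suc k) = open_arcs s k - {s (Suc k)}"
proof -
  have b: "1 \<le> s (Suc k)" "s (s (Suc k)) = Suc k"
    using inv321_range[OF s, of "Suc k"] inv321_involutive[OF s, of "Suc k"] k by auto
  then show "s (Suc k) \<in> open_arcs s k"
    using k by (simp add: open_arcs_def)
  show "open_arcs s (Suc k) = open_arcs s k - {s (Suc k)}"
  proof (intro set_eqI iffI)
    fix i
    assume "i \<in> open_arcs s (Suc k)"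
    then have "1 \<le> i" "i \<le> k" "Suc k < s i"
      using k by (auto simp: open_arcs_def le_Suc_eq)
    moreover have "i \<noteq> s (Suc k)"
      using b calculation by auto
    ultimately show "i \<in> open_arcs s k - {s (Suc k)}"
      by (simp add: open_arcs_def)
  next
    fix i
    assume "i \<in> open_arcs s k - {s (Suc k)}"
    then have i: "1 \<le> i" "i \<le> k" "k < s i" "i \<noteq> s (Suc k)"
      by (auto simp: open_arcs_def)
    have "s i \<noteq> Suc k"
    proof
      assume "s i = Suc k"
      then have "s (Suc k) = i"
        using inv321_involutive[OF s, of i] i k by simp
      then show False using i by simp
    qed
    then show "i \<in> open_arcs s (Suc k)"
      using i by (simp add: open_arcs_def)
  qed
qed

lemma open_arcs_Suc_Flat:
  assumes s: "inv321 N s" and k: "Suc k \<le> N" "s (Suc k) = Suc k"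
  shows "open_arcs s k = {}" "open_arcs s (Suc k) = {}"
proof -
  have none: "\<not> k < s i" if "1 \<le> i" "i \<le> k" for i
  proof
    assume "k < s i"
    moreover have "s i \<noteq> Suc k"
      using inv321_involutive[OF s, of i] k that by force
    ultimately show False
      using inv321_lr_max[OF s, of i "Suc k"] k that by simp
  qed
  then show "open_arcs s k = {}"
    by (auto simp: open_arcs_def)
  have "\<not> Suc k < s i" if "1 \<le> i" "i \<le> Suc k" for i
    using none[of i] that k by (cases "i = Suc k") auto
  then show "open_arcs s (Suc k) = {}"
    by (auto simp: open_arcs_def)
qed

lemma step_word_admissible:
  assumes s: "inv321 N s"
  shows "k \<le> N \<Longrightarrow> admissible (step_word s k) \<and> height (step_word s k) = card (open_arcs s k)"
proof (induction k)
  case 0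
  then show ?case by (simp add: open_arcs_def)
next
  case (Suc k)
  have fin: "finite (open_arcs s k)"
    by (simp add: open_arcs_def)
  consider "Suc k < s (Suc k)" | "s (Suc k) < Suc k" | "s (Suc k) = Suc k"
    by linarith
  then show ?case
  proof cases
    case 1
    then show ?thesis
      using Suc open_arcs_Suc_Up[OF s] fin by (simp add: step_of_def open_arcs_def)
  next
    case 2
    then have "card (open_arcs s k) \<noteq> 0"
      using open_arcs_Suc_Down(1)[OF s] Suc.prems fin by auto
    then show ?thesis
      using 2 Suc open_arcs_Suc_Down[OF s] fin by (simp add: step_of_def Suc_le_eq card_gt_0_iff)
  next
    case 3
    then show ?thesis
      using Suc open_arcs_Suc_Flat[OF s] by (simp add: step_of_def)
  qed
qed

lemma step_word_in_paths: "inv321 N s \<Longrightarrow> step_word s N \<in> paths N 0"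
  using step_word_admissible[of N s N] inv321_range[of N s]
  by (fastforce simp: paths_def open_arcs_def)

lemma descent_iff_Up_Down:
  assumes s: "inv321 N s" and i: "1 \<le> i" "Suc i \<le> N"
  shows "s (Suc i) < s i \<longleftrightarrow> step_of s i = Up \<and> step_of s (Suc i) = Down"
proof
  assume desc: "s (Suc i) < s i"
  have "i < s i"
  proof (rule ccontr)
    assume "\<not> i < s i"
    moreover have "1 \<le> s (Suc i)" "s (s i) = i" "s (s (Suc i)) = Suc i"
      using inv321_range[OF s, of "Suc i"] inv321_involutive[OF s] i by auto
    ultimately show False
      using inv321_lr_max[OF s, of "s (Suc i)" "s i"] desc i by simp
  qed
  moreover have "s (Suc i) < Suc i"
    using inv321_lr_max[OF s, of i "Suc i"] desc i by (cases "Suc i \<le> s (Suc i)") auto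
  ultimately show "step_of s i = Up \<and> step_of s (Suc i) = Down"
    by (simp add: step_of_def)
next
  assume "step_of s i = Up \<and> step_of s (Suc i) = Down"
  then show "s (Suc i) < s i"
    by (auto simp: step_of_def split: if_splits)
qed

lemma weight_step_word:
  assumes s: "inv321 N s"
  shows "k \<le> N \<Longrightarrow> weight x (step_word s k) = (\<Prod>i\<in>Des k s. x i)"
proof (induction k)
  case 0
  then show ?case by (simp add: Des_def)
next
  case (Suc k)
  show ?case
  proof (cases k)
    case 0
    then show ?thesis by (simp add: Des_def)
  next
    case (Suc m)
    have Des_Suc: "Des (Suc k) s = Des k s \<union> (if s (Suc k) < s k then {k} else {})"
      unfolding Des_def using Suc by (auto simp: less_Suc_eq)
    have "k \<notin> Des k s" "finite (Des k s)"
      unfolding Des_def by simp_all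
    moreover have "step_of s (Suc k) = Down \<and> step_of s k = Up \<longleftrightarrow> s (Suc k) < s k"
      using descent_iff_Up_Down[OF s, of k] Suc \<open>Suc k \<le> N\<close> by auto
    ultimately show ?thesis
      using Suc Des_Suc Suc.IH \<open>Suc k \<le> N\<close> by simp
  qed
qed

lemma card_rank_inj:
  fixes C :: "'a::linorder set"
  assumes "finite C" "y \<in> C" "z \<in> C" and rank: "card {c \<in> C. c \<le> y} = card {c \<in> C. c \<le> z}"
  shows "y = z"
proof (rule ccontr)
  have less: "card {c \<in> C. c \<le> u} < card {c \<in> C. c \<le> v}" if "u < v" "v \<in> C" for u v
  proof (rule psubset_card_mono)
    have "v \<in> {c \<in> C. c \<le> v}" "v \<notin> {c \<in> C. c \<le> u}" "{c \<in> C. c \<le> u} \<subseteq> {c \<in> C. c \<le> v}"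
      using that by auto
    then show "{c \<in> C. c \<le> u} \<subset> {c \<in> C. c \<le> v}"
      by blast
  qed (use assms(1) in simp)
  assume "y \<noteq> z"
  then show False
    using less[of y z] less[of z y] assms(2,3) rank by (auto simp: neq_iff)
qed

text \<open>The \<open>k\<close>-th opener of a \<open>321\<close>-avoiding involution is matched with its \<open>k\<close>-th closer.\<close>

lemma inv321_opener_rank:
  assumes s: "inv321 N s" and i: "1 \<le> i" "i \<le> N" "i < s i"
  shows "card {j \<in> {1..N}. j < s j \<and> j \<le> i} = card {c \<in> {1..N}. s c < c \<and> c \<le> s i}"
proof (rule bij_betw_same_card)
  show "bij_betw s {j \<in> {1..N}. j < s j \<and> j \<le> i} {c \<in> {1..N}. s c < c \<and> c \<le> s i}"
  proof (rule bij_betw_byWitness[where f' = s])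
    show "s ` {j \<in> {1..N}. j < s j \<and> j \<le> i} \<subseteq> {c \<in> {1..N}. s c < c \<and> c \<le> s i}"
    proof (rule image_subsetI)
      fix j
      assume "j \<in> {j \<in> {1..N}. j < s j \<and> j \<le> i}"
      then have j: "1 \<le> j" "j \<le> N" "j < s j" "j \<le> i"
        by auto
      then have "s j \<le> s i"
        using inv321_lr_max[OF s, of j i] i by (cases "j = i") auto
      then show "s j \<in> {c \<in> {1..N}. s c < c \<and> c \<le> s i}"
        using inv321_range[OF s] inv321_involutive[OF s] j by auto
    qed
    show "s ` {c \<in> {1..N}. s c < c \<and> c \<le> s i} \<subseteq> {j \<in> {1..N}. j < s j \<and> j \<le> i}"
    proof (rule image_subsetI)
      fix c
      assume "c \<in> {c \<in> {1..N}. s c < c \<and> c \<le> s i}"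
      then have c: "1 \<le> c" "c \<le> N" "s c < c" "c \<le> s i"
        by auto
      have "s c \<le> i"
      proof (rule ccontr)
        assume "\<not> s c \<le> i"
        moreover have "c \<noteq> s i"
          using calculation inv321_involutive[OF s] i by auto
        ultimately show False
          using inv321_lr_max[OF s, of i "s c"] inv321_range[OF s] inv321_involutive[OF s] i c by force
      qed
      then show "s c \<in> {j \<in> {1..N}. j < s j \<and> j \<le> i}"
        using inv321_range[OF s] inv321_involutive[OF s] c by auto
    qed
  qed (use inv321_involutive[OF s] in auto)
qed

lemma inv321_opener_determined:
  assumes s: "inv321 N s" and t: "inv321 N t"
    and steps: "\<And>j. 1 \<le> j \<Longrightarrow> j \<le> N \<Longrightarrow> step_of s j = step_of t j"
    and i: "1 \<le> i" "i \<le> N" "i < s i"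
  shows "s i = t i"
proof -
  have down: "s j < j \<longleftrightarrow> t j < j" and up: "j < s j \<longleftrightarrow> j < t j" if "1 \<le> j" "j \<le> N" for j
    using steps[OF that] by (auto simp: step_of_def split: if_splits)
  define closers where "closers = {c \<in> {1..N}. s c < c}"
  have closers_t: "closers = {c \<in> {1..N}. t c < c}"
    unfolding closers_def using down by auto
  have i': "i < t i"
    using up i by blast
  show ?thesis
  proof (rule card_rank_inj)
    show "finite closers"
      by (simp add: closers_def)
    show "s i \<in> closers"
      using i inv321_range[OF s i(1,2)] inv321_involutive[OF s i(1,2)] by (simp add: closers_def)
    show "t i \<in> closers"
      using i' inv321_range[OF t i(1,2)] inv321_involutive[OF t i(1,2)] by (simp add: closers_t)
    have rank_s: "{c \<in> {1..N}. s c < c \<and> c \<le> y} = {c \<in> closers. c \<le> y}" for y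
      unfolding closers_def by auto
    have rank_t: "{c \<in> {1..N}. t c < c \<and> c \<le> y} = {c \<in> closers. c \<le> y}" for y
      unfolding closers_t by auto
    have "{j \<in> {1..N}. j < s j \<and> j \<le> i} = {j \<in> {1..N}. j < t j \<and> j \<le> i}"
      using up by auto
    then show "card {c \<in> closers. c \<le> s i} = card {c \<in> closers. c \<le> t i}"
      using inv321_opener_rank[OF s i] inv321_opener_rank[OF t i(1,2) i'] unfolding rank_s rank_t by simp
  qed
qed

lemma step_word_inj:
  assumes s: "inv321 N s" and t: "inv321 N t" and eq: "step_word s N = step_word t N"
  shows "s = t"
proof
  fix i
  have steps: "step_of s j = step_of t j" if "1 \<le> j" "j \<le> N" for j
    using eq that by (simp add: step_word_eq_iff)
  note opener = inv321_opener_determined[OF s t steps]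
  consider "\<not> (1 \<le> i \<and> i \<le> N)" | "1 \<le> i" "i \<le> N" "i < s i" | "1 \<le> i" "i \<le> N" "s i < i"
    | "1 \<le> i" "i \<le> N" "s i = i"
    by linarith
  then show "s i = t i"
  proof cases
    case 1
    then show ?thesis using inv321_fixed[OF s] inv321_fixed[OF t] by simp
  next
    case 2
    then show ?thesis using opener by blast
  next
    case 3
    have "1 \<le> s i" "s i \<le> N" "s i < s (s i)"
      using 3 inv321_range[OF s] inv321_involutive[OF s] by auto
    then have "t (s i) = i"
      using opener[of "s i"] inv321_involutive[OF s] 3 by simp
    then show ?thesis
      using inv321_involutive[OF t, of "s i"] \<open>1 \<le> s i\<close> \<open>s i \<le> N\<close> by simp
  next
    case 4
    then show ?thesis
      using steps[of i] by (simp add: step_of_def split: if_splits)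
  qed
qed

lemma inv321_Suc: "inv321 n s \<Longrightarrow> inv321 (Suc n) s"
proof (rule inv321I)
  assume s: "inv321 n s"
  have fixed: "s (Suc n) = Suc n"
    using inv321_fixed[OF s] by simp
  show "s i = i" if "\<not> (1 \<le> i \<and> i \<le> Suc n)" for i
    by (rule inv321_fixed[OF s]) (use that in auto)
  show "1 \<le> s i \<and> s i \<le> Suc n \<and> s (s i) = i" if "1 \<le> i" "i \<le> Suc n" for i
  proof (cases "i = Suc n")
    case False
    then have "i \<le> n"
      using that by simp
    then show ?thesis
      using inv321_range[OF s, of i] inv321_involutive[OF s, of i] that by simp
  qed (simp add: fixed)
  show "s i \<le> s j" if "1 \<le> i" "i < j" "j \<le> Suc n" "j \<le> s j" for i j
    using inv321_lr_max[OF s, of i j] inv321_range[OF s, of i] fixed that by (cases "j = Suc n") auto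
qed

text \<open>
  If the positions \<open>n + 1, \<dots>, M\<close> of \<open>s\<close> are all closers, \<open>insert_arc n M s\<close> shifts them to
  \<open>n + 2, \<dots>, M + 1\<close> and adds the arc \<open>(n + 1, M + 2)\<close>.
\<close>

definition insert_arc :: "nat \<Rightarrow> nat \<Rightarrow> (nat \<Rightarrow> nat) \<Rightarrow> nat \<Rightarrow> nat" where
  "insert_arc n M s j =
     (if 1 \<le> j \<and> j \<le> n then (if s j \<le> n then s j else Suc (s j))
      else if j = Suc n then M + 2
      else if n + 2 \<le> j \<and> j \<le> M + 1 then s (j - 1)
      else if j = M + 2 then Suc n
      else j)"

lemma closers_matched_below:
  assumes s: "inv321 M s" and closers: "\<And>i. n < i \<Longrightarrow> i \<le> M \<Longrightarrow> s i < i" and p: "n < p" "p \<le> M"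
  shows "1 \<le> s p \<and> s p \<le> n \<and> s (s p) = p"
proof -
  have "1 \<le> s p" "s p \<le> M" "s (s p) = p"
    using inv321_range[OF s, of p] inv321_involutive[OF s, of p] p by auto
  moreover have "s p \<le> n"
    using closers[of "s p"] closers[OF p] calculation by (metis not_le less_asym)
  ultimately show ?thesis by simp
qed

lemma insert_arc_involutive:
  assumes s: "inv321 M s" and n: "n \<le> M" and closers: "\<And>i. n < i \<Longrightarrow> i \<le> M \<Longrightarrow> s i < i"
    and j: "1 \<le> j" "j \<le> M + 2"
  shows "1 \<le> insert_arc n M s j \<and> insert_arc n M s j \<le> M + 2 \<and> insert_arc n M s (insert_arc n M s j) = j"
proof -
  let ?t = "insert_arc n M s"
  consider "j \<le> n" | "j = Suc n" | "n + 2 \<le> j" "j \<le> M + 1" | "j = M + 2"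
    using j by linarith
  then show ?thesis
  proof cases
    case 1
    have sj: "1 \<le> s j" "s j \<le> M" "s (s j) = j"
      using inv321_range[OF s, of j] inv321_involutive[OF s, of j] 1 j n by auto
    show ?thesis
    proof (cases "s j \<le> n")
      case True
      then show ?thesis using 1 j sj by (simp add: insert_arc_def)
    next
      case False
      then show ?thesis using 1 j sj by (simp add: insert_arc_def)
    qed
  next
    case 3
    then have "1 \<le> s (j - 1) \<and> s (j - 1) \<le> n \<and> s (s (j - 1)) = j - 1"
      by (intro closers_matched_below[of M s n, OF s closers]) auto
    moreover have "\<not> j - 1 \<le> n"
      using 3 by simp
    ultimately show ?thesis
      using 3 by (simp add: insert_arc_def)
  qed (use n in \<open>simp_all add: insert_arc_def\<close>)
qed

lemma insert_arc_lr_max: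
  assumes s: "inv321 M s" and n: "n \<le> M" and closers: "\<And>i. n < i \<Longrightarrow> i \<le> M \<Longrightarrow> s i < i"
    and ij: "1 \<le> i" "i < j" "j \<le> M + 2" and exc: "j \<le> insert_arc n M s j"
  shows "insert_arc n M s i \<le> insert_arc n M s j"
proof -
  let ?t = "insert_arc n M s"
  consider "j \<le> n" | "j = Suc n" | "n + 2 \<le> j" "j \<le> M + 1" | "j = M + 2"
    using ij by linarith
  then show ?thesis
  proof cases
    case 1
    have "j \<le> s j"
      using exc 1 ij by (simp add: insert_arc_def split: if_splits)
    then have "s i \<le> s j"
      using inv321_lr_max[OF s, of i j] 1 ij n by simp
    then show ?thesis
      using 1 ij by (simp add: insert_arc_def)
  next
    case 2
    have "?t i \<le> M + 2"
      using insert_arc_involutive[of M s n, OF s n closers, of i] ij by simp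
    then show ?thesis
      using 2 by (simp add: insert_arc_def)
  next
    case 3
    then have "s (j - 1) \<le> n"
      using closers_matched_below[of M s n "j - 1", OF s closers] by simp
    then show ?thesis
      using exc 3 by (simp add: insert_arc_def)
  next
    case 4
    then show ?thesis
      using exc n by (simp add: insert_arc_def)
  qed
qed

lemma insert_arc_inv321:
  assumes s: "inv321 M s" and n: "n \<le> M" and closers: "\<And>i. n < i \<Longrightarrow> i \<le> M \<Longrightarrow> s i < i"
  shows "inv321 (M + 2) (insert_arc n M s)"
proof (rule inv321I)
  show "insert_arc n M s i = i" if "\<not> (1 \<le> i \<and> i \<le> M + 2)" for i
    using that n by (auto simp: insert_arc_def)
  show "1 \<le> insert_arc n M s i \<and> insert_arc n M s i \<le> M + 2 \<and> insert_arc n M s (insert_arc n M s i) = i"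
    if "1 \<le> i" "i \<le> M + 2" for i
    using insert_arc_involutive[of M s n, OF s n closers that] .
  show "insert_arc n M s i \<le> insert_arc n M s j"
    if "1 \<le> i" "i < j" "j \<le> M + 2" "j \<le> insert_arc n M s j" for i j
    using insert_arc_lr_max[of M s n, OF s n closers that] .
qed

lemma step_word_insert_arc:
  assumes "n \<le> M"
  shows "step_word (insert_arc n M s) (Suc n) = Up # step_word s n"
proof -
  have "step_of (insert_arc n M s) i = step_of s i" if "1 \<le> i" "i \<le> n" for i
    using that by (auto simp: insert_arc_def step_of_def)
  then show ?thesis
    using assms by (simp add: step_word_eq_iff insert_arc_def step_of_def)
qed

lemma insert_arc_closers:
  assumes s: "inv321 M s" and n: "n \<le> M" and closers: "\<And>i. n < i \<Longrightarrow> i \<le> M \<Longrightarrow> s i < i"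
    and i: "Suc n < i" "i \<le> M + 2"
  shows "insert_arc n M s i < i"
proof (cases "i = M + 2")
  case False
  then have "n < i - 1" "i - 1 \<le> M"
    using i by auto
  then show ?thesis
    using False i closers_matched_below[of M s n "i - 1", OF s closers] by (simp add: insert_arc_def)
qed (use n in \<open>simp add: insert_arc_def\<close>)

lemma step_word_surj:
  "admissible ws \<Longrightarrow> \<exists>s. inv321 (length ws + height ws) s \<and> step_word s (length ws) = ws
      \<and> (\<forall>i. length ws < i \<and> i \<le> length ws + height ws \<longrightarrow> s i < i)"
proof (induction ws)
  case Nil
  have "inv321 0 id"
    by (rule inv321I) auto
  then show ?case by auto
next
  case (Cons c ws)
  define n where "n = length ws"
  define M where "M = n + height ws"
  have "admissible ws"
    using Cons.prems by (cases c) auto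
  then obtain s where s: "inv321 M s" and word: "step_word s n = ws"
    and closers_all: "\<forall>i. n < i \<and> i \<le> M \<longrightarrow> s i < i"
    using Cons.IH unfolding n_def M_def by blast
  have closers: "\<And>i. n < i \<Longrightarrow> i \<le> M \<Longrightarrow> s i < i"
    using closers_all by blast
  show ?case
  proof (cases c)
    case Up
    let ?t = "insert_arc n M s"
    have n: "n \<le> M"
      by (simp add: M_def)
    have "step_word ?t (length (c # ws)) = c # ws"
      using Up word step_word_insert_arc[OF n] by (simp add: n_def)
    moreover have "inv321 (M + 2) ?t"
      by (rule insert_arc_inv321[of M s n, OF s n closers])
    moreover have "\<forall>i. Suc n < i \<and> i \<le> M + 2 \<longrightarrow> ?t i < i"
      using insert_arc_closers[of M s n, OF s n closers] by blast
    moreover have "length (c # ws) + height (c # ws) = M + 2" "length (c # ws) = Suc n"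
      using Up by (simp_all add: n_def M_def)
    ultimately show ?thesis
      by metis
  next
    case Down
    then have "1 \<le> height ws"
      using Cons.prems by simp
    then have "s (Suc n) < Suc n" "length (c # ws) + height (c # ws) = M" "length (c # ws) = Suc n"
      using closers[of "Suc n"] Down by (simp_all add: n_def M_def)
    moreover have "step_word s (Suc n) = c # ws"
      using calculation(1) Down word by (simp add: step_of_def)
    ultimately show ?thesis
      using s closers by (metis Suc_lessD)
  next
    case Flat
    then have "height ws = 0"
      using Cons.prems by simp
    then have "s (Suc n) = Suc n" "length (c # ws) + height (c # ws) = Suc n" "length (c # ws) = Suc n"
      using inv321_fixed[OF s, of "Suc n"] Flat by (simp_all add: n_def M_def)
    moreover have "step_word s (Suc n) = c # ws"
      using calculation(1) Flat word by (simp add: step_of_def)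
    moreover have "inv321 (Suc n) s"
      using inv321_Suc[OF s] \<open>height ws = 0\<close> by (simp add: M_def)
    ultimately show ?thesis
      by (metis not_le)
  qed
qed

lemma bij_betw_step_word: "bij_betw (\<lambda>s. step_word s n) {s. inv321 n s} (paths n 0)"
proof (rule bij_betw_imageI)
  show "inj_on (\<lambda>s. step_word s n) {s. inv321 n s}"
    using step_word_inj by (auto simp: inj_on_def)
  show "(\<lambda>s. step_word s n) ` {s. inv321 n s} = paths n 0"
  proof (intro set_eqI iffI)
    fix ws
    assume "ws \<in> paths n 0"
    then have "admissible ws" "length ws = n" "height ws = 0"
      by (auto simp: paths_def)
    then obtain s where "inv321 n s" "step_word s n = ws"
      using step_word_surj[of ws] by auto
    then show "ws \<in> (\<lambda>s. step_word s n) ` {s. inv321 n s}"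
      by blast
  qed (auto intro: step_word_in_paths)
qed

lemma sum_inv321_prod_Des:
  assumes sym: "\<And>c. corner_paths x c (Suc c) = corner_paths x (Suc c) c"
  shows "(\<Sum>s | inv321 n s. \<Prod>i\<in>Des n s. x i) = corner_paths x (n - n div 2) (n div 2)"
proof -
  have "(\<Sum>s | inv321 n s. \<Prod>i\<in>Des n s. x i) = (\<Sum>s | inv321 n s. weight x (step_word s n))"
    by (rule sum.cong) (auto simp: weight_step_word)
  also have "\<dots> = (\<Sum>ws\<in>paths n 0. weight x ws)"
    by (rule sum.reindex_bij_betw[OF bij_betw_step_word])
  finally show ?thesis
    using sum_paths_height_0[OF sym] by simp
qed

section \<open>Centrosymmetric involutions\<close>

lemma Des_centrosymmetric_reflect:
  assumes cs: "centrosymmetric (2 * n + 1) \<pi>" and i: "1 \<le> i" "i \<le> 2 * n"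
  shows "i \<in> Des (2 * n + 1) \<pi> \<longleftrightarrow> 2 * n + 1 - i \<in> Des (2 * n + 1) \<pi>"
proof -
  have "i \<in> {1..2 * n + 1}" "i + 1 \<in> {1..2 * n + 1}"
    using i by auto
  then have e1: "\<pi> i + \<pi> (2 * n + 1 + 1 - i) = 2 * n + 1 + 1"
    and e2: "\<pi> (i + 1) + \<pi> (2 * n + 1 + 1 - (i + 1)) = 2 * n + 1 + 1"
    using cs unfolding centrosymmetric_def by blast+
  have idx: "2 * n + 1 + 1 - (i + 1) = 2 * n + 1 - i" "2 * n + 1 - i + 1 = 2 * n + 1 + 1 - i"
    using i by auto
  have "\<pi> (2 * n + 1 - i) = 2 * n + 2 - \<pi> (i + 1)"
    using e2 unfolding idx(1) by arith
  moreover have "\<pi> (2 * n + 1 - i + 1) = 2 * n + 2 - \<pi> i"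
    using e1 unfolding idx(2) by arith
  moreover have "\<pi> i \<le> 2 * n + 2" "\<pi> (i + 1) \<le> 2 * n + 2"
    using e1 e2 by arith+
  ultimately show ?thesis
    using i unfolding Des_def by auto
qed
lemma mem_Des_plus_iff: "i \<in> Des_plus (2 * n + 1) \<pi> \<longleftrightarrow> i \<in> Des (2 * n + 1) \<pi> \<and> i \<le> n"
  by (auto simp: Des_plus_def Des_def)

lemma Des_centrosymmetric:
  assumes cs: "centrosymmetric (2 * n + 1) \<pi>"
  shows "Des (2 * n + 1) \<pi> = Des_plus (2 * n + 1) \<pi> \<union> (\<lambda>i. 2 * n + 1 - i) ` Des_plus (2 * n + 1) \<pi>"
proof (intro set_eqI iffI)
  let ?r = "\<lambda>i. 2 * n + 1 - i"
  have range: "1 \<le> i \<and> i \<le> 2 * n" if "i \<in> Des (2 * n + 1) \<pi>" for i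
    using that by (auto simp: Des_def)
  fix i
  {
    assume i: "i \<in> Des (2 * n + 1) \<pi>"
    show "i \<in> Des_plus (2 * n + 1) \<pi> \<union> ?r ` Des_plus (2 * n + 1) \<pi>"
    proof (cases "i \<le> n")
      case True
      then show ?thesis using i mem_Des_plus_iff by blast
    next
      case False
      then have "?r i \<in> Des_plus (2 * n + 1) \<pi>"
        using i range[OF i] Des_centrosymmetric_reflect[OF cs, of i] mem_Des_plus_iff by simp
      moreover have "i = ?r (?r i)"
        using range[OF i] by simp
      ultimately show ?thesis by blast
    qed
  }
  assume "i \<in> Des_plus (2 * n + 1) \<pi> \<union> ?r ` Des_plus (2 * n + 1) \<pi>"
  then show "i \<in> Des (2 * n + 1) \<pi>"
  proof
    assume "i \<in> ?r ` Des_plus (2 * n + 1) \<pi>"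
    then obtain j where j: "j \<in> Des (2 * n + 1) \<pi>" "i = ?r j"
      using mem_Des_plus_iff by blast
    then show ?thesis
      using range[of j] Des_centrosymmetric_reflect[OF cs, of j] by simp
  qed (use mem_Des_plus_iff in blast)
qed

lemma des_centrosymmetric:
  assumes cs: "centrosymmetric (2 * n + 1) \<pi>"
  shows "des (2 * n + 1) \<pi> = 2 * des_plus (2 * n + 1) \<pi>"
proof -
  let ?r = "\<lambda>i. 2 * n + 1 - i" and ?P = "Des_plus (2 * n + 1) \<pi>"
  have low: "i \<le> n" if "i \<in> ?P" for i
    using mem_Des_plus_iff that by blast
  have "inj_on ?r ?P"
    by (rule inj_onI) (use low in fastforce)
  moreover have "?P \<inter> ?r ` ?P = {}"
  proof -
    have "n < ?r i" if "i \<in> ?P" for i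
      using low[OF that] by simp
    then show ?thesis
      using low by (auto simp: not_le[symmetric])
  qed
  moreover have "finite ?P"
    by (simp add: Des_plus_def)
  ultimately show ?thesis
    unfolding des_def des_plus_def Des_centrosymmetric[OF cs] by (simp add: card_Un_disjoint card_image)
qed

definition mirror_ext :: "nat \<Rightarrow> (nat \<Rightarrow> nat) \<Rightarrow> nat \<Rightarrow> nat" where
  "mirror_ext n s i =
     (if 1 \<le> i \<and> i \<le> n then s i
      else if n + 2 \<le> i \<and> i \<le> 2 * n + 1 then 2 * n + 2 - s (2 * n + 2 - i) else i)"

definition restrict_half :: "nat \<Rightarrow> (nat \<Rightarrow> nat) \<Rightarrow> nat \<Rightarrow> nat" where
  "restrict_half n p i = (if 1 \<le> i \<and> i \<le> n then p i else i)"

lemma mirror_ext_low: "1 \<le> i \<Longrightarrow> i \<le> n \<Longrightarrow> mirror_ext n s i = s i"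
  by (simp add: mirror_ext_def)

lemma mirror_ext_middle [simp]: "mirror_ext n s (Suc n) = Suc n"
  by (simp add: mirror_ext_def)

lemma mirror_ext_high:
  assumes "1 \<le> i" "i \<le> n"
  shows "mirror_ext n s (2 * n + 2 - i) = 2 * n + 2 - s i"
proof -
  have "\<not> 2 * n + 2 - i \<le> n" "n + 2 \<le> 2 * n + 2 - i" "2 * n + 2 - i \<le> 2 * n + 1"
    "2 * n + 2 - (2 * n + 2 - i) = i"
    using assms by auto
  then show ?thesis
    by (simp add: mirror_ext_def)
qed

lemma high_half_cases:
  fixes n i :: nat
  assumes "n + 2 \<le> i" "i \<le> 2 * n + 1"
  obtains i' where "1 \<le> i'" "i' \<le> n" "i = 2 * n + 2 - i'"
  using assms by (intro that[of "2 * n + 2 - i"]) auto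

lemma mirror_ext_involutive:
  assumes s: "inv321 n s" and i: "1 \<le> i" "i \<le> 2 * n + 1"
  shows "1 \<le> mirror_ext n s i \<and> mirror_ext n s i \<le> 2 * n + 1
    \<and> (i \<le> n \<longrightarrow> mirror_ext n s i \<le> n) \<and> (n + 2 \<le> i \<longrightarrow> n + 2 \<le> mirror_ext n s i)
    \<and> mirror_ext n s (mirror_ext n s i) = i"
proof -
  consider "i \<le> n" | "i = n + 1" | "n + 2 \<le> i"
    by linarith
  then show ?thesis
  proof cases
    case 1
    then show ?thesis
      using inv321_range[OF s, of i] inv321_involutive[OF s, of i] i by (simp add: mirror_ext_low)
  next
    case 2
    then show ?thesis by simp
  next
    case 3
    then obtain i' where i': "1 \<le> i'" "i' \<le> n" "i = 2 * n + 2 - i'"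
      using i high_half_cases by blast
    have "s i' \<le> n" "1 \<le> s i'" "s (s i') = i'"
      using inv321_range[OF s, of i'] inv321_involutive[OF s, of i'] i' by auto
    then show ?thesis
      using 3 i' mirror_ext_high[of i' n s] mirror_ext_high[of "s i'" n s] by auto
  qed
qed

lemma mirror_ext_lr_max:
  assumes s: "inv321 n s" and ij: "1 \<le> i" "i < j" "j \<le> 2 * n + 1" and exc: "j \<le> mirror_ext n s j"
  shows "mirror_ext n s i \<le> mirror_ext n s j"
proof -
  let ?p = "mirror_ext n s"
  have p: "1 \<le> ?p k \<and> ?p k \<le> 2 * n + 1 \<and> (k \<le> n \<longrightarrow> ?p k \<le> n) \<and> (n + 2 \<le> k \<longrightarrow> n + 2 \<le> ?p k)"
    if "1 \<le> k" "k \<le> 2 * n + 1" for k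
    using mirror_ext_involutive[OF s that] by blast
  consider "j \<le> n" | "i \<le> n + 1" "n + 1 \<le> j" | "n + 2 \<le> i"
    using ij by linarith
  then show ?thesis
  proof cases
    case 1
    then show ?thesis
      using inv321_lr_max[OF s, of i j] ij exc by (simp add: mirror_ext_low)
  next
    case 2
    have "?p i \<le> n + 1"
    proof (cases "i = n + 1")
      case False
      then show ?thesis using p[of i] ij 2 by simp
    qed simp
    moreover have "n + 1 \<le> ?p j"
    proof (cases "j = n + 1")
      case False
      then show ?thesis using p[of j] ij 2 by simp
    qed simp
    ultimately show ?thesis by simp
  next
    case 3
    have "i \<le> 2 * n + 1" "n + 2 \<le> j"
      using 3 ij by simp_all
    obtain i' where i': "1 \<le> i'" "i' \<le> n" "i = 2 * n + 2 - i'"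
      by (rule high_half_cases[OF 3 \<open>i \<le> 2 * n + 1\<close>])
    obtain j' where j': "1 \<le> j'" "j' \<le> n" "j = 2 * n + 2 - j'"
      by (rule high_half_cases[OF \<open>n + 2 \<le> j\<close> ij(3)])
    have "j' < i'"
      using ij i' j' by simp
    have si: "s i' \<le> n" and sj: "s j' \<le> n"
      using inv321_range[OF s] i' j' by auto
    have "s j' \<le> j'"
      using exc j' sj mirror_ext_high[of j' n s] by simp
    then have "s j' \<le> s i'"
      using inv321_rl_min[OF s j'(1) \<open>j' < i'\<close> i'(2)] by simp
    then show ?thesis
      using i' j' si sj mirror_ext_high[of i' n s] mirror_ext_high[of j' n s] by simp
  qed
qed

lemma centrosymmetric_mirror_ext:
  assumes s: "inv321 n s"
  shows "centrosymmetric (2 * n + 1) (mirror_ext n s)"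
  unfolding centrosymmetric_def
proof
  fix i
  assume "i \<in> {1..2 * n + 1}"
  then consider "1 \<le> i" "i \<le> n" | "i = n + 1" | "n + 2 \<le> i" "i \<le> 2 * n + 1"
    by fastforce
  then show "mirror_ext n s i + mirror_ext n s (2 * n + 1 + 1 - i) = 2 * n + 1 + 1"
  proof cases
    case 1
    then show ?thesis
      using inv321_range[OF s, of i] mirror_ext_high[of i n s] by (simp add: mirror_ext_low)
  next
    case 2
    then show ?thesis by simp
  next
    case 3
    then obtain i' where i': "1 \<le> i'" "i' \<le> n" "i = 2 * n + 2 - i'"
      using high_half_cases by blast
    then show ?thesis
      using inv321_range[OF s, of i'] mirror_ext_high[of i' n s] by (simp add: mirror_ext_low)
  qed
qed

lemma mirror_ext_ICinv321:
  assumes s: "inv321 n s"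
  shows "mirror_ext n s \<in> ICinv321 (2 * n + 1)"
  unfolding ICinv321_iff
proof
  show "inv321 (2 * n + 1) (mirror_ext n s)"
  proof (rule inv321I)
    show "mirror_ext n s i = i" if "\<not> (1 \<le> i \<and> i \<le> 2 * n + 1)" for i
      using that by (auto simp: mirror_ext_def)
    show "1 \<le> mirror_ext n s i \<and> mirror_ext n s i \<le> 2 * n + 1 \<and> mirror_ext n s (mirror_ext n s i) = i"
      if "1 \<le> i" "i \<le> 2 * n + 1" for i
      using mirror_ext_involutive[OF s that] by blast
    show "mirror_ext n s i \<le> mirror_ext n s j"
      if "1 \<le> i" "i < j" "j \<le> 2 * n + 1" "j \<le> mirror_ext n s j" for i j
      using mirror_ext_lr_max[OF s that] .
  qed
qed (rule centrosymmetric_mirror_ext[OF s])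

lemma ICinv321_maps_half:
  assumes p: "p \<in> ICinv321 (2 * n + 1)"
  shows "p (n + 1) = n + 1" "\<And>i. 1 \<le> i \<Longrightarrow> i \<le> n \<Longrightarrow> 1 \<le> p i \<and> p i \<le> n"
proof -
  have inv: "inv321 (2 * n + 1) p" and cs: "centrosymmetric (2 * n + 1) p"
    using p by (simp_all add: ICinv321_iff)
  have "n + 1 \<in> {1..2 * n + 1}"
    by simp
  then have "p (n + 1) + p (2 * n + 1 + 1 - (n + 1)) = 2 * n + 1 + 1"
    using cs unfolding centrosymmetric_def by blast
  then show mid: "p (n + 1) = n + 1"
    by simp
  fix i
  assume i: "1 \<le> i" "i \<le> n"
  have "p i \<noteq> n + 1"
    using inv321_involutive[OF inv, of i] mid i by auto
  moreover have "p i \<le> n + 1"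
    using inv321_lr_max[OF inv, of i "n + 1"] mid i by simp
  ultimately show "1 \<le> p i \<and> p i \<le> n"
    using inv321_range[OF inv, of i] i by simp
qed

lemma restrict_half_inv321:
  assumes p: "p \<in> ICinv321 (2 * n + 1)"
  shows "inv321 n (restrict_half n p)"
proof -
  have inv: "inv321 (2 * n + 1) p"
    using p by (simp add: ICinv321_iff)
  show ?thesis
    using ICinv321_maps_half(2)[OF p] inv321_involutive[OF inv] inv321_lr_max[OF inv]
    by (intro inv321I) (auto simp: restrict_half_def)
qed

lemma mirror_ext_restrict_half:
  assumes p: "p \<in> ICinv321 (2 * n + 1)"
  shows "mirror_ext n (restrict_half n p) = p"
proof
  fix i
  have inv: "inv321 (2 * n + 1) p" and cs: "centrosymmetric (2 * n + 1) p"
    using p by (simp_all add: ICinv321_iff)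
  consider "1 \<le> i" "i \<le> n" | "i = n + 1" | "n + 2 \<le> i" "i \<le> 2 * n + 1" | "\<not> (1 \<le> i \<and> i \<le> 2 * n + 1)"
    by linarith
  then show "mirror_ext n (restrict_half n p) i = p i"
  proof cases
    case 2
    then show ?thesis
      using ICinv321_maps_half(1)[OF p] by simp
  next
    case 3
    then obtain i' where i': "1 \<le> i'" "i' \<le> n" "i = 2 * n + 2 - i'"
      using high_half_cases by blast
    then have "i' \<in> {1..2 * n + 1}"
      by simp
    then have "p i' + p (2 * n + 1 + 1 - i') = 2 * n + 1 + 1"
      using cs unfolding centrosymmetric_def by blast
    then show ?thesis
      using i' mirror_ext_high[of i' n "restrict_half n p"] by (simp add: restrict_half_def)
  next
    case 4
    then show ?thesis
      using inv321_fixed[OF inv] by (auto simp: mirror_ext_def)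
  qed (simp add: mirror_ext_def restrict_half_def)
qed

lemma bij_betw_mirror_ext: "bij_betw (mirror_ext n) {s. inv321 n s} (ICinv321 (2 * n + 1))"
proof (rule bij_betw_byWitness[where f' = "restrict_half n"])
  show "\<forall>s\<in>{s. inv321 n s}. restrict_half n (mirror_ext n s) = s"
    using inv321_fixed by (fastforce simp: restrict_half_def mirror_ext_def)
  show "\<forall>p\<in>ICinv321 (2 * n + 1). mirror_ext n (restrict_half n p) = p"
    using mirror_ext_restrict_half by blast
  show "mirror_ext n ` {s. inv321 n s} \<subseteq> ICinv321 (2 * n + 1)"
    using mirror_ext_ICinv321 by blast
  show "restrict_half n ` ICinv321 (2 * n + 1) \<subseteq> {s. inv321 n s}"
    using restrict_half_inv321 by blast
qed

lemma Des_plus_mirror_ext: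
  assumes s: "inv321 n s"
  shows "Des_plus (2 * n + 1) (mirror_ext n s) = Des n s"
proof (intro set_eqI)
  fix x
  show "x \<in> Des_plus (2 * n + 1) (mirror_ext n s) \<longleftrightarrow> x \<in> Des n s"
  proof (cases "x < n")
    case True
    then show ?thesis
      by (auto simp: Des_plus_def Des_def mirror_ext_def)
  next
    case False
    have "s n \<le> n"
      using inv321_range[OF s, of n] inv321_fixed[OF s, of n] by (cases "n = 0") auto
    then have "n \<notin> Des (2 * n + 1) (mirror_ext n s)"
      by (simp add: Des_def mirror_ext_def)
    then show ?thesis
      using False by (auto simp: Des_plus_def Des_def)
  qed
qed

lemma sum_ICinv321_prod_Des_plus:
  assumes sym: "\<And>c. corner_paths x c (Suc c) = corner_paths x (Suc c) c"
  shows "(\<Sum>\<pi>\<in>ICinv321 (2 * n + 1). \<Prod>i\<in>Des_plus (2 * n + 1) \<pi>. x i)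
       = corner_paths x ((n + 1) div 2) (n div 2)"
proof -
  have "(\<Sum>\<pi>\<in>ICinv321 (2 * n + 1). \<Prod>i\<in>Des_plus (2 * n + 1) \<pi>. x i)
      = (\<Sum>s | inv321 n s. \<Prod>i\<in>Des_plus (2 * n + 1) (mirror_ext n s). x i)"
    by (rule sum.reindex_bij_betw[OF bij_betw_mirror_ext, symmetric])
  also have "\<dots> = (\<Sum>s | inv321 n s. \<Prod>i\<in>Des n s. x i)"
    using Des_plus_mirror_ext by (intro sum.cong) auto
  also have "\<dots> = corner_paths x ((n + 1) div 2) (n div 2)"
  proof -
    have "n - n div 2 = (n + 1) div 2"
      by presburger
    then show ?thesis
      using sum_inv321_prod_Des[OF sym, of n] by simp
  qed
  finally show ?thesis .
qed

lemma sum_ICinv321_des_plus: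
  fixes t :: "'a::comm_ring_1"
  shows "(\<Sum>\<pi>\<in>ICinv321 (2 * n + 1). t ^ des_plus (2 * n + 1) \<pi>)
   = (\<Sum>k=0..n div 2. of_nat (((n + 1) div 2) choose k) * of_nat ((n div 2) choose k) * t ^ k)"
proof -
  have sym: "corner_paths (\<lambda>_. t) c (Suc c) = corner_paths (\<lambda>_. t) (Suc c) c" for c
    by (simp add: corner_paths_const narayana_sum_commute)
  show ?thesis
    using sum_ICinv321_prod_Des_plus[OF sym, of n]
    by (simp add: des_plus_def corner_paths_const narayana_sum_eq)
qed

lemma sum_ICinv321_maj_plus:
  "(\<Sum>\<pi>\<in>ICinv321 (2 * n + 1). q ^ maj_plus (2 * n + 1) \<pi>) = qbinom q n (n div 2)"
proof -
  have "(\<Sum>\<pi>\<in>ICinv321 (2 * n + 1). q ^ maj_plus (2 * n + 1) \<pi>)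
      = corner_paths (\<lambda>i. q ^ i) ((n + 1) div 2) (n div 2)"
    using sum_ICinv321_prod_Des_plus[OF corner_paths_power_symmetric, of q n]
    by (simp add: maj_plus_def power_sum)
  moreover have "(n + 1) div 2 + n div 2 = n"
    by presburger
  ultimately show ?thesis
    using corner_paths_power[of q "(n + 1) div 2" "n div 2"] by simp
qed

lemma sum_ICinv321_des:
  fixes q :: "'a::comm_ring_1"
  shows "(\<Sum>\<pi>\<in>ICinv321 (2 * n + 1). q ^ des (2 * n + 1) \<pi>)
   = (\<Sum>k=0..n div 2. of_nat (((n + 1) div 2) choose k) * of_nat ((n div 2) choose k) * q ^ (2 * k))"
proof -
  have "q ^ des (2 * n + 1) \<pi> = (q ^ 2) ^ des_plus (2 * n + 1) \<pi>" if "\<pi> \<in> ICinv321 (2 * n + 1)" for \<pi>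
    using that des_centrosymmetric[of n \<pi>] by (simp add: ICinv321_iff power_mult)
  then have "(\<Sum>\<pi>\<in>ICinv321 (2 * n + 1). q ^ des (2 * n + 1) \<pi>)
      = (\<Sum>\<pi>\<in>ICinv321 (2 * n + 1). (q ^ 2) ^ des_plus (2 * n + 1) \<pi>)"
    by (rule sum.cong[OF refl])
  then show ?thesis
    using sum_ICinv321_des_plus[of "q ^ 2" n] by (simp add: power_mult)
qed

theorem mainTheorem4:
  fixes q :: "'a::comm_ring_1" and n :: nat
  shows "(\<Sum>\<pi>\<in>ICinv321 (2*n+1). q ^ des_plus (2*n+1) \<pi>)
           = (\<Sum>k=0..n div 2. of_nat (((n+1) div 2) choose k) * of_nat ((n div 2) choose k) * q ^ k)
       \<and> (\<Sum>\<pi>\<in>ICinv321 (2*n+1). q ^ maj_plus (2*n+1) \<pi>) = qbinom q n (n div 2)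
       \<and> (\<Sum>\<pi>\<in>ICinv321 (2*n+1). q ^ des (2*n+1) \<pi>)
           = (\<Sum>k=0..n div 2. of_nat (((n+1) div 2) choose k) * of_nat ((n div 2) choose k) * q ^ (2*k))"
  by (intro conjI sum_ICinv321_des_plus sum_ICinv321_maj_plus sum_ICinv321_des)

end
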